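(* Let $k\ge2$ and $n\in\mathbb{Z}$ with $\mathcal{F}_{n,k}(x)$ not identically zero. Then there is a polynomial $P_{n,k}(y)\in\mathbb{Z}[y]$ with $P_{n,k}(0)\neq0$ such that $$\mathcal{F}_{n,k}(x)=x^{r_{n,k}}\,P_{n,k}(x^k).$$ In particular, if $r_{n,k}>0$ then $x=0$ is a root of $\mathcal{F}_{n,k}$ of multiplicity exactly $r_{n,k}$, and if $r_{n,k}=0$ then $x=0$ is not a root.
   Context: For $k\ge2$, the polynomials $\mathcal{F}_{n,k}(x)\in\mathbb{Z}[x]$ ($n\in\mathbb{Z}$) are defined by $\mathcal{F}_{1,k}=1$, $\mathcal{F}_{n,k}=0$ for $n=0,-1,\dots,-(k-2)$, and $\mathcal{F}_{n,k}(x)=\sum_{j=1}^{k}x^{k-j}\mathcal{F}_{n-j,k}(x)$ for all $n\in\mathbb{Z}$. This recurrence is used upwards for $n\ge2$, and downwards for $n\le-(k-1)$ as $\mathcal{F}_{n,k}=\mathcal{F}_{n+k,k}-\sum_{j=1}^{k-1}x^j\mathcal{F}_{n+j,k}$. The quantity $r_{n,k}\in\{0,\dots,k-1\}$ is defined as the residue of $(k-1)(n-1)$ modulo $k$ if $n>0$, and as the residue of $|n|+1$ modulo $k$ if $n\le0$. *)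

theory Defs
  imports "HOL-Computational_Algebra.Polynomial"
begin

text \<open>The polynomials F_{n,k}(x) in Z[x], for all integers n (meaningful for k >= 2;
  for k < 2 we set them to 0 to get a total function).\<close>

function Fpoly :: "nat \<Rightarrow> int \<Rightarrow> int poly" where
  "Fpoly k n =
     (if k < 2 then 0
      else if n = 1 then 1
      else if 2 - int k \<le> n \<and> n \<le> 0 then 0
      else if n \<ge> 2 then (\<Sum>j\<in>{1..k}. monom 1 (k - j) * Fpoly k (n - int j))
      else Fpoly k (n + int k) - (\<Sum>j\<in>{1..k-1}. monom 1 j * Fpoly k (n + int j)))"
  by pat_completeness auto
termination
  by (relation "measures [\<lambda>(k,n). if n \<ge> 2 - int k then 0 else 1,
                         \<lambda>(k,n). if n \<ge> 2 - int k then nat (n + int k) else nat (- n)]")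
     auto

definition rnk :: "int \<Rightarrow> nat \<Rightarrow> nat" where
  "rnk n k = (if n > 0 then nat (((int k - 1) * (n - 1)) mod int k)
              else nat ((\<bar>n\<bar> + 1) mod int k))"

end

theory Submission
  imports Defs "HOL-Number_Theory.Cong"
begin

(* Every step of the recurrence preserves a grading: if all exponents of F_(n-j) are
   congruent to 1 - (n - j) mod k, then all exponents of x^(k-j) F_(n-j) are congruent to
   1 - n, and the downward recurrence behaves in the same way.  Hence F_n = x^r P(x^k) with
   r = r_(n,k), the residue of 1 - n, and it remains to show that the coefficient of x^r,
   which is P(0), does not vanish.
   For n >= 1 all coefficients are non-negative and the coefficient of x^r dominates that
   of x^0 in F_1 (if n <= k) or that of x^r in F_(n-k), so it is positive.  For n <= 0 write
   1 - n = q k + r; the three-term relation F_(m-k) = (1 + x^k) F_m - x F_(m+1) gives, by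
   induction on q, the coefficient (-1)^r binomial(q, r), and F_n = 0 whenever q < r. *)

definition residue_supported :: "nat \<Rightarrow> int \<Rightarrow> 'a::zero poly \<Rightarrow> bool" where
  "residue_supported k c p \<longleftrightarrow> (\<forall>d. coeff p d \<noteq> 0 \<longrightarrow> [int d = c] (mod int k))"

lemma residue_supported_0 [simp]: "residue_supported k c 0"
  by (simp add: residue_supported_def)

lemma residue_supported_1: "residue_supported k 0 (1 :: 'a::comm_semiring_1 poly)"
  by (simp add: residue_supported_def coeff_1)

lemma residue_supported_cong:
  "[c = c'] (mod int k) \<Longrightarrow> residue_supported k c p \<Longrightarrow> residue_supported k c' p"
  unfolding residue_supported_def using cong_trans by blast

lemma residue_supported_add:
  "residue_supported k c p \<Longrightarrow> residue_supported k c q \<Longrightarrow> residue_supported k c (p + q)"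
  unfolding residue_supported_def coeff_add by (metis add.right_neutral)

lemma residue_supported_diff:
  fixes p q :: "'a::ab_group_add poly"
  shows "residue_supported k c p \<Longrightarrow> residue_supported k c q \<Longrightarrow> residue_supported k c (p - q)"
  unfolding residue_supported_def coeff_diff by (metis diff_0_right diff_self)

lemma residue_supported_sum:
  "(\<And>j. j \<in> J \<Longrightarrow> residue_supported k c (f j)) \<Longrightarrow> residue_supported k c (\<Sum>j\<in>J. f j)"
  by (induction J rule: infinite_finite_induct) (auto intro: residue_supported_add)

lemma residue_supported_monom_mult:
  fixes p :: "'a::comm_semiring_1 poly"
  assumes "residue_supported k c p"
  shows "residue_supported k (c + int j) (monom 1 j * p)"
  unfolding residue_supported_def
proof (intro allI impI)
  fix d assume "coeff (monom 1 j * p) d \<noteq> 0"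
  then have "j \<le> d" "[int (d - j) = c] (mod int k)"
    using assms by (auto simp: coeff_monom_mult residue_supported_def split: if_splits)
  then show "[int d = c + int j] (mod int k)"
    using cong_add_rcancel[of "int (d - j)" "int j" c "int k"] by (simp add: of_nat_diff)
qed

lemma coeff_pcompose_monom:
  fixes P :: "'a::comm_semiring_1 poly"
  assumes k: "k > 0"
  shows "coeff (pcompose P (monom 1 k)) d = (if k dvd d then coeff P (d div k) else 0)"
proof (induction P arbitrary: d)
  case (pCons a P)
  have expand: "coeff (pcompose (pCons a P) (monom 1 k)) d
      = (if d = 0 then a else 0) + (if d < k then 0 else coeff (pcompose P (monom 1 k)) (d - k))"
    by (simp add: pcompose_pCons coeff_monom_mult coeff_pCons split: nat.split)
  consider "d = 0" | "0 < d" "d < k" | "k \<le> d" by linarith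
  then show ?case
  proof cases
    case 1
    then show ?thesis using k expand by simp
  next
    case 2
    then show ?thesis using expand by (auto dest: dvd_imp_le)
  next
    case 3
    then have d: "d = (d - k) + k" by simp
    have "d div k = Suc ((d - k) div k)" "k dvd d \<longleftrightarrow> k dvd (d - k)"
      using k by (subst d; simp)+
    then show ?thesis using 3 k expand pCons.IH by simp
  qed
qed simp

lemma residue_supported_imp_monom_mult_pcompose:
  fixes p :: "'a::comm_semiring_1 poly"
  assumes supp: "residue_supported k (int r) p" and r: "r < k"
  shows "\<exists>P. poly P 0 = coeff p r \<and> p = monom 1 r * pcompose P (monom 1 k)"
proof -
  define P where "P = (\<Sum>i\<le>degree p. monom (coeff p (k * i + r)) i)"
  have coeff_P: "coeff P i = coeff p (k * i + r)" for i
  proof -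
    have "coeff P i = (if i \<le> degree p then coeff p (k * i + r) else 0)"
      by (simp add: P_def coeff_sum coeff_monom)
    also have "\<dots> = coeff p (k * i + r)"
    proof (cases "i \<le> degree p")
      case False
      have "i \<le> k * i" using r by (cases k) auto
      then have "degree p < k * i + r" using False by linarith
      then show ?thesis using False by (simp add: coeff_eq_0)
    qed simp
    finally show ?thesis .
  qed
  have supp_mod: "d mod k = r" if "coeff p d \<noteq> 0" for d
    using supp that r unfolding residue_supported_def cong_int_iff by (simp add: cong_def)
  have "p = monom 1 r * pcompose P (monom 1 k)"
  proof (rule poly_eqI)
    fix d
    show "coeff p d = coeff (monom 1 r * pcompose P (monom 1 k)) d"
    proof (cases "r \<le> d \<and> k dvd (d - r)")
      case True
      then have "d = k * ((d - r) div k) + r" by simp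
      then show ?thesis using True r by (auto simp: coeff_monom_mult coeff_pcompose_monom coeff_P)
    next
      case False
      have "coeff p d = 0"
      proof (rule ccontr)
        assume "coeff p d \<noteq> 0"
        then have "d mod k = r" by (rule supp_mod)
        then have "r \<le> d" "k dvd (d - r)"
          using mod_less_eq_dividend[of d k] minus_mod_eq_mult_div[of d k] by auto
        then show False using False by blast
      qed
      then show ?thesis using False r by (auto simp: coeff_monom_mult coeff_pcompose_monom)
    qed
  qed
  moreover have "poly P 0 = coeff p r" by (simp add: poly_0_coeff_0 coeff_P)
  ultimately show ?thesis by blast
qed

lemma order_0_monom_mult:
  fixes q :: "'a::idom poly"
  assumes "poly q 0 \<noteq> 0"
  shows "order 0 (monom 1 r * q) = r"
proof -
  have "q \<noteq> 0" using assms by auto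
  then have "order 0 (monom 1 r * q) = order 0 (monom 1 r) + order 0 q"
    by (simp add: order_mult)
  then show ?thesis using assms by (simp add: order_0_monom order_root)
qed

declare Fpoly.simps [simp del]

lemma Fpoly_1: "k \<ge> 2 \<Longrightarrow> Fpoly k 1 = 1"
  by (subst Fpoly.simps) simp

lemma Fpoly_initial_zero: "k \<ge> 2 \<Longrightarrow> 2 - int k \<le> n \<Longrightarrow> n \<le> 0 \<Longrightarrow> Fpoly k n = 0"
  by (subst Fpoly.simps) simp

lemma Fpoly_up:
  "k \<ge> 2 \<Longrightarrow> n \<ge> 2 \<Longrightarrow> Fpoly k n = (\<Sum>j\<in>{1..k}. monom 1 (k - j) * Fpoly k (n - int j))"
  by (subst Fpoly.simps) simp

lemma Fpoly_down:
  "k \<ge> 2 \<Longrightarrow> n < 2 - int k \<Longrightarrow>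
    Fpoly k n = Fpoly k (n + int k) - (\<Sum>j\<in>{1..k-1}. monom 1 j * Fpoly k (n + int j))"
  by (subst Fpoly.simps) simp

lemma Fpoly_rec:
  assumes k: "k \<ge> 2"
  shows "Fpoly k n = (\<Sum>j\<in>{1..k}. monom 1 (k - j) * Fpoly k (n - int j))"
proof (cases "n \<ge> 2")
  case True
  then show ?thesis using Fpoly_up k by simp
next
  case False
  have down: "Fpoly k (n - int k) =
      Fpoly k n - (\<Sum>j\<in>{1..k-1}. monom 1 j * Fpoly k (n - int k + int j))"
    using Fpoly_down[OF k, of "n - int k"] False by simp
  have reflect: "(\<Sum>j\<in>{1..k-1}. monom 1 (k - j) * Fpoly k (n - int j)) =
      (\<Sum>j\<in>{1..k-1}. monom 1 j * Fpoly k (n - int k + int j))"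
    by (rule sum.reindex_bij_witness[of _ "\<lambda>j. k - j" "\<lambda>j. k - j"]) (auto simp: of_nat_diff)
  have "{1..k} = insert k {1..k-1}" using k by auto
  then show ?thesis using k reflect by (simp add: down)
qed

lemma Fpoly_three_term:
  assumes k: "k \<ge> 2"
  shows "Fpoly k (n - int k) = (1 + monom 1 k) * Fpoly k n - monom 1 1 * Fpoly k (n + 1)"
proof -
  define S where "S = (\<Sum>j\<in>{1..k-1}. monom 1 (k - j) * Fpoly k (n - int j))"
  have "{1..k} = insert k {1..k-1}" using k by auto
  then have rec_n: "Fpoly k n = Fpoly k (n - int k) + S"
    using Fpoly_rec[OF k, of n] k by (simp add: S_def)
  have peel_first: "(\<Sum>j\<in>{1..k}. g j) = g 1 + (\<Sum>j\<in>{1..k-1}. g (Suc j))" for g :: "nat \<Rightarrow> int poly"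
  proof -
    have "{1..k} = insert 1 {Suc 1..Suc (k - 1)}" "1 \<notin> {Suc 1..Suc (k - 1)}" using k by auto
    then show ?thesis
      using sum.insert[of "{Suc 1..Suc (k - 1)}" 1 g] sum.shift_bounds_cl_Suc_ivl[of g 1 "k - 1"] by simp
  qed
  have "monom 1 1 * Fpoly k (n + 1) = monom 1 1 * (monom 1 (k - 1) * Fpoly k n
      + (\<Sum>j\<in>{1..k-1}. monom 1 (k - Suc j) * Fpoly k (n - int j)))"
    unfolding Fpoly_rec[OF k, of "n + 1"] peel_first by (simp add: algebra_simps)
  also have "\<dots> = monom 1 k * Fpoly k n + S"
    using k unfolding S_def distrib_left sum_distrib_left
    by (auto simp: mult.assoc[symmetric] mult_monom Suc_diff_Suc intro!: sum.cong)
  finally show ?thesis using rec_n by (simp add: algebra_simps)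
qed

lemma Fpoly_residue_supported: "k \<ge> 2 \<Longrightarrow> residue_supported k (1 - n) (Fpoly k n)"
proof (induction k n rule: Fpoly.induct)
  case (1 k n)
  note k = \<open>k \<ge> 2\<close>
  consider "n = 1" | "2 - int k \<le> n \<and> n \<le> 0" | "n \<ge> 2" | "n < 2 - int k" by linarith
  then show ?case
  proof cases
    case 1
    then show ?thesis using k by (simp add: Fpoly_1 residue_supported_1)
  next
    case 2
    then show ?thesis using k by (simp add: Fpoly_initial_zero)
  next
    case up: 3
    have "residue_supported k (1 - n) (monom 1 (k - j) * Fpoly k (n - int j))" if j: "j \<in> {1..k}" for j
    proof (rule residue_supported_cong)
      have "residue_supported k (1 - (n - int j)) (Fpoly k (n - int j))"
        by (rule "1.IH"(1)) (use k up j in auto)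
      then show "residue_supported k (1 - (n - int j) + int (k - j)) (monom 1 (k - j) * Fpoly k (n - int j))"
        by (rule residue_supported_monom_mult)
      show "[1 - (n - int j) + int (k - j) = 1 - n] (mod int k)"
        using j by (simp add: of_nat_diff cong_iff_dvd_diff)
    qed
    then show ?thesis
      unfolding Fpoly_up[OF k up] by (rule residue_supported_sum)
  next
    case down: 4
    have "[1 - (n + int k) = 1 - n] (mod int k)"
      by (simp add: cong_iff_dvd_diff)
    moreover have "residue_supported k (1 - (n + int k)) (Fpoly k (n + int k))"
      by (rule "1.IH"(2)) (use k down in auto)
    ultimately have "residue_supported k (1 - n) (Fpoly k (n + int k))"
      by (rule residue_supported_cong)
    moreover have "residue_supported k (1 - n) (monom 1 j * Fpoly k (n + int j))" if j: "j \<in> {1..k-1}" for j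
    proof -
      have "residue_supported k (1 - (n + int j)) (Fpoly k (n + int j))"
        by (rule "1.IH"(3)) (use k down j in auto)
      from residue_supported_monom_mult[OF this, of j] show ?thesis by simp
    qed
    ultimately show ?thesis
      unfolding Fpoly_down[OF k down] by (intro residue_supported_diff residue_supported_sum)
  qed
qed

lemma int_rnk:
  assumes "k > 0"
  shows "int (rnk n k) = (1 - n) mod int k"
proof (cases "n > 0")
  case True
  have "(int k - 1) * (n - 1) = int k * (n - 1) + (1 - n)" by (simp add: algebra_simps)
  then show ?thesis using True assms by (simp add: rnk_def)
next
  case False
  then show ?thesis using assms by (simp add: rnk_def)
qed

lemma coeff_Fpoly_up:
  "k \<ge> 2 \<Longrightarrow> n \<ge> 2 \<Longrightarrow> coeff (Fpoly k n) d =
    (\<Sum>j\<in>{1..k}. if d < k - j then 0 else coeff (Fpoly k (n - int j)) (d - (k - j)))"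
  by (simp add: Fpoly_up coeff_sum coeff_monom_mult cong: if_cong)

lemma coeff_Fpoly_nonneg: "k \<ge> 2 \<Longrightarrow> n \<ge> 2 - int k \<Longrightarrow> 0 \<le> coeff (Fpoly k n) d"
proof (induction k n arbitrary: d rule: Fpoly.induct)
  case (1 k n)
  note k = \<open>k \<ge> 2\<close>
  consider "n = 1" | "n \<le> 0" | "n \<ge> 2" by linarith
  then show ?case
  proof cases
    case 1
    then show ?thesis using k by (simp add: Fpoly_1 coeff_1)
  next
    case 2
    then show ?thesis using k "1.prems" by (simp add: Fpoly_initial_zero)
  next
    case up: 3
    have "0 \<le> coeff (Fpoly k (n - int j)) d'" if "j \<in> {1..k}" for j d'
      by (rule "1.IH"(1)) (use k up that in auto)
    then show ?thesis
      unfolding coeff_Fpoly_up[OF k up] by (intro sum_nonneg) auto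
  qed
qed

lemma coeff_Fpoly_summand_le:
  assumes k: "k \<ge> 2" and n: "n \<ge> 2" and j: "j \<in> {1..k}" and d: "k - j \<le> d"
  shows "coeff (Fpoly k (n - int j)) (d - (k - j)) \<le> coeff (Fpoly k n) d"
proof -
  let ?f = "\<lambda>j. if d < k - j then 0 else coeff (Fpoly k (n - int j)) (d - (k - j))"
  have "?f i \<ge> 0" if "i \<in> {1..k}" for i
    using that n by (simp add: coeff_Fpoly_nonneg[OF k])
  then have "?f j \<le> sum ?f {1..k}"
    using j by (intro member_le_sum) auto
  then show ?thesis
    using d unfolding coeff_Fpoly_up[OF k n] by simp
qed

lemma coeff_Fpoly_rnk_pos: "k \<ge> 2 \<Longrightarrow> n \<ge> 1 \<Longrightarrow> 0 < coeff (Fpoly k n) (rnk n k)"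
proof (induction k n rule: Fpoly.induct)
  case (1 k n)
  note k = \<open>k \<ge> 2\<close>
  consider "n = 1" | "2 \<le> n \<and> n \<le> int k" | "n > int k" using "1.prems" by linarith
  then show ?case
  proof cases
    case 1
    then show ?thesis using k by (simp add: Fpoly_1 rnk_def)
  next
    case 2
    define j where "j = nat (n - 1)"
    have j: "j \<in> {1..k}" "n - int j = 1" using 2 by (auto simp: j_def)
    have "(1 - n) mod int k = (1 - n + int k) mod int k" by simp
    also have "\<dots> = 1 - n + int k" using 2 by (intro mod_pos_pos_trivial) auto
    finally have "int (rnk n k) = 1 - n + int k" using k by (simp add: int_rnk)
    then have "rnk n k = k - j" using j by linarith
    then show ?thesis
      using coeff_Fpoly_summand_le[OF k _ j(1), of n "rnk n k"] 2 j k by (simp add: Fpoly_1)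
  next
    case 3
    have "0 < coeff (Fpoly k (n - int k)) (rnk (n - int k) k)"
      by (rule "1.IH"(1)) (use k 3 in auto)
    moreover have "int (rnk (n - int k) k) = int (rnk n k)"
      using k mod_add_self2[of "1 - n" "int k"] by (simp add: int_rnk algebra_simps)
    then have "rnk (n - int k) k = rnk n k" by simp
    ultimately show ?thesis
      using coeff_Fpoly_summand_le[OF k _ _, of n k "rnk n k"] 3 k by simp
  qed
qed

lemma Fpoly_nonpos_index_eq_0:
  assumes k: "k \<ge> 2" and "q < r" and "r < k"
  shows "Fpoly k (1 - int (q * k + r)) = 0"
  using assms(2,3)
proof (induction q arbitrary: r)
  case 0
  then show ?case using k by (simp add: Fpoly_initial_zero)
next
  case (Suc q)
  obtain s where s: "r = Suc s" using Suc.prems by (cases r) auto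
  define m where "m = 1 - int (q * k + r)"
  have index: "1 - int (Suc q * k + r) = m - int k" by (simp add: m_def)
  have shift: "m + 1 = 1 - int (q * k + s)" by (simp add: m_def s)
  have "Fpoly k m = 0"
    unfolding m_def using Suc by simp
  moreover have "Fpoly k (m + 1) = 0"
    unfolding shift using Suc.prems s by (intro Suc.IH) auto
  ultimately show ?case unfolding index Fpoly_three_term[OF k] by simp
qed

lemma coeff_Fpoly_nonpos_index:
  assumes k: "k \<ge> 2" and "r < k"
  shows "coeff (Fpoly k (1 - int (q * k + r))) r = (-1) ^ r * int (q choose r)"
  using assms(2)
proof (induction q arbitrary: r)
  case 0
  then show ?case using k by (cases "r = 0") (simp_all add: Fpoly_1 Fpoly_initial_zero)
next
  case (Suc q)
  define m where "m = 1 - int (q * k + r)"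
  have index: "1 - int (Suc q * k + r) = m - int k" by (simp add: m_def)
  have step: "coeff (Fpoly k (1 - int (Suc q * k + r))) r
      = coeff (Fpoly k m) r - (if r = 0 then 0 else coeff (Fpoly k (m + 1)) (r - 1))"
    using Suc.prems unfolding index Fpoly_three_term[OF k] by (simp add: distrib_right coeff_monom_mult)
  have IH_r: "coeff (Fpoly k m) r = (-1) ^ r * int (q choose r)"
    unfolding m_def using Suc by blast
  show ?case
  proof (cases "r = 0")
    case True
    then show ?thesis using step IH_r by simp
  next
    case False
    then obtain s where s: "r = Suc s" by (cases r) auto
    have shift: "m + 1 = 1 - int (q * k + s)" by (simp add: m_def s)
    have IH_s: "coeff (Fpoly k (m + 1)) s = (-1) ^ s * int (q choose s)"
      unfolding shift using Suc.prems s by (intro Suc.IH) auto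
    have "coeff (Fpoly k (1 - int (Suc q * k + r))) r
        = (-1) ^ r * int (q choose r) - (-1) ^ s * int (q choose s)"
      using step IH_r IH_s s by simp
    also have "\<dots> = (-1) ^ r * int (Suc q choose r)"
      using s by (simp add: algebra_simps)
    finally show ?thesis .
  qed
qed

lemma coeff_Fpoly_rnk_nonzero:
  assumes k: "k \<ge> 2" and nz: "Fpoly k n \<noteq> 0"
  shows "coeff (Fpoly k n) (rnk n k) \<noteq> 0"
proof (cases "n \<ge> 1")
  case True
  then show ?thesis using coeff_Fpoly_rnk_pos[OF k True] by simp
next
  case False
  define q r where "q = nat (1 - n) div k" and "r = nat (1 - n) mod k"
  have n: "n = 1 - int (q * k + r)" using False by (simp add: q_def r_def)
  have "int (rnk n k) = int r"
    using k False by (simp add: int_rnk r_def zmod_int)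
  then have rnk: "rnk n k = r" by simp
  have "r < k" using k by (simp add: r_def)
  moreover have "r \<le> q"
  proof (rule ccontr)
    assume "\<not> r \<le> q"
    then have "Fpoly k n = 0"
      unfolding n using \<open>r < k\<close> by (intro Fpoly_nonpos_index_eq_0[OF k]) auto
    with nz show False by contradiction
  qed
  moreover have "coeff (Fpoly k n) r = (-1) ^ r * int (q choose r)"
    unfolding n using \<open>r < k\<close> by (rule coeff_Fpoly_nonpos_index[OF k])
  ultimately show ?thesis using rnk by simp
qed

lemma Fpoly_eq_monom_mult_pcompose:
  assumes k: "k \<ge> 2" and nz: "Fpoly k n \<noteq> 0"
  shows "\<exists>P. poly P 0 \<noteq> 0 \<and> Fpoly k n = monom 1 (rnk n k) * pcompose P (monom 1 k)"
proof -
  have "[1 - n = int (rnk n k)] (mod int k)"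
    using k by (simp add: int_rnk)
  then have "residue_supported k (int (rnk n k)) (Fpoly k n)"
    using Fpoly_residue_supported[OF k] by (rule residue_supported_cong)
  moreover have "rnk n k < k"
    using k int_rnk[of k n] pos_mod_bound[of "int k" "1 - n"] by linarith
  ultimately obtain P where P0: "poly P 0 = coeff (Fpoly k n) (rnk n k)"
    and F: "Fpoly k n = monom 1 (rnk n k) * pcompose P (monom 1 k)"
    using residue_supported_imp_monom_mult_pcompose by blast
  have "poly P 0 \<noteq> 0"
    unfolding P0 using k nz by (rule coeff_Fpoly_rnk_nonzero)
  with F show ?thesis by blast
qed

theorem mainTheorem12:
  fixes k :: nat and n :: int
  assumes "k \<ge> 2" and "Fpoly k n \<noteq> 0"
  shows "(\<exists>P :: int poly. poly P 0 \<noteq> 0 \<and>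
            Fpoly k n = monom 1 (rnk n k) * pcompose P (monom 1 k))
         \<and> (rnk n k > 0 \<longrightarrow> order 0 (Fpoly k n) = rnk n k)
         \<and> (rnk n k = 0 \<longrightarrow> poly (Fpoly k n) 0 \<noteq> 0)"
proof -
  obtain P :: "int poly" where P0: "poly P 0 \<noteq> 0"
    and F: "Fpoly k n = monom 1 (rnk n k) * pcompose P (monom 1 k)"
    using Fpoly_eq_monom_mult_pcompose[OF assms] by blast
  have Q0: "poly (pcompose P (monom 1 k)) 0 \<noteq> 0"
    using P0 assms(1) by (simp add: poly_pcompose poly_monom zero_power)
  have "order 0 (Fpoly k n) = rnk n k"
    unfolding F using Q0 by (rule order_0_monom_mult)
  moreover have "rnk n k = 0 \<Longrightarrow> poly (Fpoly k n) 0 \<noteq> 0"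
    using F Q0 by simp
  ultimately show ?thesis using P0 F by blast
qed

end
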